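(* Let $\mathcal{K}$ be a continuous unitary representation of $\overline{\mathfrak{S}}_\infty$ in a Hilbert space $\mathcal{H}$ and let $k\in\mathbb{N}$. Then the sequence $\{\mathcal{K}((k\;\;N))\}_{N\in\mathbb{N},\,N\neq k}$ converges, as $N\to\infty$, in the weak operator topology to a self-adjoint projection $O_k$.
   Context: $\overline{\mathfrak{S}}_\infty$ is the group of all bijections of $\mathbb{N}$, with the Polish topology in which the subgroups $\mathfrak{S}(n,\infty)=\{s: s(j)=j \text{ for } j=1,\dots,n\}$ form a fundamental system of neighborhoods of the identity; continuity of $\mathcal{K}$ means $\lim_{n\to\infty}\sup_{s\in\mathfrak{S}(n,\infty)}\|\mathcal{K}(s)\eta-\eta\|=0$ for each $\eta\in\mathcal{H}$. $(k\;N)$ denotes the transposition interchanging $k$ and $N$. *)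

theory Defs
  imports "HOL-Analysis.Analysis" "HOL-Combinatorics.Transposition"
begin

text \<open>The infinite symmetric group: all bijections of the natural numbers
  (the paper's index set {1,2,...} is modelled by the type nat).\<close>

definition Sinf :: "(nat \<Rightarrow> nat) set" where
  "Sinf = {s. bij s}"

definition Sinf_stab :: "nat \<Rightarrow> (nat \<Rightarrow> nat) set" where
  "Sinf_stab n = {s. bij s \<and> (\<forall>j<n. s j = j)}"

definition unitary_op :: "('h::real_inner \<Rightarrow> 'h) \<Rightarrow> bool" where
  "unitary_op U \<longleftrightarrow> bounded_linear U \<and> surj U \<and> (\<forall>x y. inner (U x) (U y) = inner x y)"

definition unitary_rep :: "((nat \<Rightarrow> nat) \<Rightarrow> 'h::real_inner \<Rightarrow> 'h) \<Rightarrow> bool" where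
  "unitary_rep K \<longleftrightarrow>
     (\<forall>s\<in>Sinf. unitary_op (K s)) \<and>
     K id = id \<and>
     (\<forall>s\<in>Sinf. \<forall>t\<in>Sinf. K (s \<circ> t) = K s \<circ> K t)"

definition continuous_rep :: "((nat \<Rightarrow> nat) \<Rightarrow> 'h::real_normed_vector \<Rightarrow> 'h) \<Rightarrow> bool" where
  "continuous_rep K \<longleftrightarrow>
     (\<forall>\<eta>. ((\<lambda>n. SUP s\<in>Sinf_stab n. norm (K s \<eta> - \<eta>)) \<longlongrightarrow> 0) sequentially)"

definition selfadjoint_projection :: "('h::real_inner \<Rightarrow> 'h) \<Rightarrow> bool" where
  "selfadjoint_projection P \<longleftrightarrow>
     bounded_linear P \<and> P \<circ> P = P \<and> (\<forall>x y. inner (P x) y = inner x (P y))"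

definition wot_tendsto :: "('i \<Rightarrow> 'h::real_inner \<Rightarrow> 'h) \<Rightarrow> ('h \<Rightarrow> 'h) \<Rightarrow> 'i filter \<Rightarrow> bool" where
  "wot_tendsto A P F \<longleftrightarrow> (\<forall>x y. ((\<lambda>i. inner (A i x) y) \<longlongrightarrow> inner (P x) y) F)"

end

theory Submission
  imports Defs
begin

text \<open>Write \<open>A\<^sub>N = K (k N)\<close>. For \<open>M, N \<ge> n > k\<close> we have \<open>(k M) = (M N)(k N)(M N)\<close> with
  \<open>(M N) \<in> S(n,\<infinity>)\<close>, so continuity makes every matrix coefficient \<open>\<langle>A\<^sub>N x, y\<rangle>\<close> Cauchy in \<open>N\<close>.
  The limits form a bounded symmetric bilinear form, which the Riesz representation theorem
  turns into a bounded self-adjoint operator \<open>P\<close>, the weak limit of the \<open>A\<^sub>N\<close>. Idempotence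
  comes from \<open>(k N)(k M) = (k M)(M N)\<close>: for \<open>N > M > k\<close> the vector \<open>A\<^sub>N A\<^sub>M x\<close> is within
  \<open>\<parallel>K (M N) x - x\<parallel>\<close> of \<open>A\<^sub>M x\<close>, hence so is its weak limit \<open>P A\<^sub>M x\<close> as \<open>N \<rightarrow> \<infinity>\<close>; letting
  \<open>M \<rightarrow> \<infinity>\<close> then gives \<open>P P x = P x\<close>.\<close>

section \<open>The Riesz representation theorem\<close>

lemma Cauchy_if_tail_dist_le:
  fixes X :: "nat \<Rightarrow> 'a::metric_space"
  assumes "\<delta> \<longlonglongrightarrow> 0"
    and "\<forall>\<^sub>F n in sequentially. \<forall>M N. n \<le> M \<longrightarrow> n \<le> N \<longrightarrow> dist (X M) (X N) \<le> \<delta> n"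
  shows "Cauchy X"
proof (rule metric_CauchyI)
  fix e :: real
  assume "e > 0"
  with assms(1) have "\<forall>\<^sub>F n in sequentially. \<delta> n < e"
    by (simp add: order_tendsto_iff)
  with assms(2) obtain n where "\<forall>M N. n \<le> M \<longrightarrow> n \<le> N \<longrightarrow> dist (X M) (X N) \<le> \<delta> n" "\<delta> n < e"
    using eventually_happens' by (metis (mono_tags, lifting) eventually_conj_iff sequentially_bot)
  then show "\<exists>n. \<forall>M\<ge>n. \<forall>N\<ge>n. dist (X M) (X N) < e"
    by force
qed

lemma linear_coeff_eq_0_if_quadratic_nonneg:
  fixes a b :: real
  assumes "\<And>t. 0 \<le> t * a + t\<^sup>2 * b"
  shows "a = 0"
proof -
  define c where "c = \<bar>b\<bar> + 1"
  have c: "c > 0" "b \<le> c - 1"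
    unfolding c_def by auto
  have "0 \<le> (- a / c) * a + (- a / c)\<^sup>2 * b"
    by (rule assms)
  also have "\<dots> = (a\<^sup>2 * b - a\<^sup>2 * c) / c\<^sup>2"
    using c by (simp add: field_simps power2_eq_square)
  also have "\<dots> \<le> (a\<^sup>2 * (c - 1) - a\<^sup>2 * c) / c\<^sup>2"
    using c by (intro divide_right_mono diff_right_mono mult_left_mono) auto
  also have "\<dots> = - a\<^sup>2 / c\<^sup>2"
    by (simp add: algebra_simps)
  finally have "a\<^sup>2 \<le> 0"
    using c by (simp add: divide_le_0_iff)
  then show ?thesis
    by simp
qed

lemma linear_eq_inner_if_minimizer:
  fixes f :: "'a::real_inner \<Rightarrow> real"
  assumes "linear f"
    and min: "\<And>z. (norm u)\<^sup>2 / 2 - f u \<le> (norm z)\<^sup>2 / 2 - f z"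
  shows "f x = inner u x"
proof -
  interpret f: linear f by fact
  have "0 \<le> t * (inner u x - f x) + t\<^sup>2 * ((norm x)\<^sup>2 / 2)" for t
  proof -
    have "(norm (u + t *\<^sub>R x))\<^sup>2 = (norm u)\<^sup>2 + 2 * t * inner u x + t\<^sup>2 * (norm x)\<^sup>2"
      by (simp only: power2_norm_eq_inner)
        (simp add: inner_add_left inner_add_right inner_commute algebra_simps power2_eq_square)
    then show ?thesis
      using min[of "u + t *\<^sub>R x"] by (simp add: f.add f.scale algebra_simps)
  qed
  then show ?thesis
    using linear_coeff_eq_0_if_quadratic_nonneg by fastforce
qed

lemma minimizing_sequence_Cauchy:
  fixes f :: "'a::real_inner \<Rightarrow> real"
  defines "Q x \<equiv> (norm x)\<^sup>2 / 2 - f x"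
  assumes "linear f"
    and m_le: "\<And>x. m \<le> Q x"
    and X: "\<And>n. Q (X n) < m + 1 / Suc n"
  shows "Cauchy X"
proof (rule Cauchy_if_tail_dist_le)
  interpret f: linear f by fact
  have parallelogram: "(norm (x - y))\<^sup>2 / 4 = Q x + Q y - 2 * Q ((1/2) *\<^sub>R (x + y))" for x y
    unfolding Q_def
    by (simp only: power2_norm_eq_inner)
      (simp add: f.add f.scale inner_add_left inner_add_right inner_diff_left inner_diff_right
        inner_commute field_simps)
  have "(\<lambda>n. 8 / real (Suc n)) \<longlonglongrightarrow> 0"
    by (rule LIMSEQ_Suc[OF lim_const_over_n])
  then show "(\<lambda>n. sqrt (8 / Suc n)) \<longlonglongrightarrow> 0"
    using tendsto_real_sqrt by fastforce
  show "\<forall>\<^sub>F n in sequentially. \<forall>M N. n \<le> M \<longrightarrow> n \<le> N \<longrightarrow> dist (X M) (X N) \<le> sqrt (8 / Suc n)"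
  proof (intro always_eventually allI impI)
    fix n M N :: nat
    assume "n \<le> M" "n \<le> N"
    then have "1 / Suc M \<le> 1 / Suc n" "1 / Suc N \<le> 1 / Suc n"
      by (simp_all add: frac_le)
    with parallelogram[of "X M" "X N"] m_le[of "(1/2) *\<^sub>R (X M + X N)"] X[of M] X[of N]
    have "(norm (X M - X N))\<^sup>2 \<le> 8 / Suc n"
      by simp
    then show "dist (X M) (X N) \<le> sqrt (8 / Suc n)"
      by (simp add: dist_norm real_le_rsqrt)
  qed
qed

lemma bounded_linear_functional_has_minimizer:
  fixes f :: "'a::{real_inner,complete_space} \<Rightarrow> real"
  assumes "bounded_linear f"
  shows "\<exists>u. \<forall>z. (norm u)\<^sup>2 / 2 - f u \<le> (norm z)\<^sup>2 / 2 - f z"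
proof -
  interpret f: bounded_linear f by fact
  define Q where "Q x = (norm x)\<^sup>2 / 2 - f x" for x
  obtain C where C: "\<And>x. norm (f x) \<le> norm x * C"
    using f.bounded by blast
  have "- C\<^sup>2 / 2 \<le> Q x" for x
  proof -
    have "f x \<le> norm x * C" using C[of x] by simp
    moreover have "0 \<le> (norm x - C)\<^sup>2" by simp
    ultimately show ?thesis unfolding Q_def by (simp add: power2_eq_square algebra_simps)
  qed
  then have bdd: "bdd_below (range Q)"
    by (meson bdd_belowI2)
  define m where "m = Inf (range Q)"
  have m_le: "m \<le> Q x" for x
    unfolding m_def using bdd by (simp add: cInf_lower)
  have "\<exists>x. Q x < m + 1 / Suc n" for n
    using cInf_less_iff[OF _ bdd, of "m + 1 / Suc n"] unfolding m_def by auto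
  then obtain X where X: "\<And>n. Q (X n) < m + 1 / Suc n"
    by metis
  then have "Cauchy X"
    using minimizing_sequence_Cauchy[OF f.linear] m_le unfolding Q_def by blast
  then obtain u where u: "X \<longlonglongrightarrow> u"
    using Cauchy_convergent_iff convergent_def by blast
  have "(\<lambda>n. Q (X n)) \<longlonglongrightarrow> Q u"
    unfolding Q_def by (intro tendsto_intros f.tendsto u) simp
  moreover have "(\<lambda>n. Q (X n)) \<longlonglongrightarrow> m"
  proof (rule tendsto_sandwich[of "\<lambda>n. m" _ _ "\<lambda>n. m + 1 / Suc n"])
    show "\<forall>\<^sub>F n in sequentially. Q (X n) \<le> m + 1 / Suc n"
      using X by (simp add: less_imp_le)
    show "(\<lambda>n. m + 1 / Suc n) \<longlonglongrightarrow> m"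
      using tendsto_add[OF tendsto_const LIMSEQ_Suc[OF lim_const_over_n]] by fastforce
  qed (use m_le in auto)
  ultimately have "Q u = m"
    by (rule LIMSEQ_unique)
  then show ?thesis
    using m_le unfolding Q_def by metis
qed

lemma riesz_representation:
  fixes f :: "'a::{real_inner,complete_space} \<Rightarrow> real"
  assumes "bounded_linear f"
  shows "\<exists>u. \<forall>x. f x = inner u x"
  using bounded_linear_functional_has_minimizer[OF assms]
    linear_eq_inner_if_minimizer[OF bounded_linear.linear[OF assms]] by metis

lemma bounded_bilinear_form_eq_inner:
  fixes B :: "'h::{real_inner,complete_space} \<Rightarrow> 'h \<Rightarrow> real"
  assumes "bounded_bilinear B"
  shows "\<exists>P. bounded_linear P \<and> (\<forall>x y. B x y = inner (P x) y)"
proof -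
  interpret B: bounded_bilinear B by fact
  have "\<forall>x. \<exists>p. \<forall>y. B x y = inner p y"
    using riesz_representation[OF B.bounded_linear_right] by blast
  then obtain P where PB: "\<And>x y. B x y = inner (P x) y"
    unfolding choice_iff by blast
  obtain K where "K > 0" and K: "\<And>x y. norm (B x y) \<le> norm x * norm y * K"
    using B.pos_bounded by blast
  have "bounded_linear P"
  proof (rule bounded_linear_intro[where K = K])
    show "P (x + z) = P x + P z" for x z
      by (rule vector_eq_rdot[THEN iffD1]) (simp flip: PB add: inner_add_left B.add_left)
    show "P (r *\<^sub>R x) = r *\<^sub>R P x" for r x
      by (rule vector_eq_rdot[THEN iffD1]) (simp flip: PB add: B.scaleR_left)
    show "norm (P x) \<le> norm x * K" for x
    proof (cases "P x = 0")
      case False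
      have "norm (P x) * norm (P x) \<le> norm x * norm (P x) * K"
        using K[of x "P x"] by (simp add: PB flip: power2_norm_eq_inner power2_eq_square)
      then show ?thesis
        using False by (simp add: mult.commute mult.left_commute)
    qed (use \<open>K > 0\<close> in simp)
  qed
  with PB show ?thesis
    by blast
qed

section \<open>Limits in the weak operator topology\<close>

lemma ex_wot_limit_if_Cauchy_inner:
  fixes A :: "nat \<Rightarrow> 'h::{real_inner,complete_space} \<Rightarrow> 'h"
  assumes lin: "\<And>N. bounded_linear (A N)"
    and bound: "\<And>N x. norm (A N x) \<le> C * norm x"
    and coeffs_Cauchy: "\<And>x y. Cauchy (\<lambda>N. inner (A N x) y)"
  shows "\<exists>P. bounded_linear P \<and> wot_tendsto A P sequentially"
proof -
  define B where "B x y = lim (\<lambda>N. inner (A N x) y)" for x y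
  have B: "(\<lambda>N. inner (A N x) y) \<longlonglongrightarrow> B x y" for x y
    unfolding B_def using coeffs_Cauchy Cauchy_convergent_iff convergent_LIMSEQ_iff by blast
  have "bounded_bilinear B"
  proof (rule bounded_bilinear.intro)
    show "B (x + x') y = B x y + B x' y" for x x' y
      by (rule LIMSEQ_unique[OF B])
        (unfold linear_simps[OF lin] inner_add_left, intro tendsto_add B)
    show "B x (y + y') = B x y + B x y'" for x y y'
      by (rule LIMSEQ_unique[OF B]) (unfold inner_add_right, intro tendsto_add B)
    show "B (r *\<^sub>R x) y = r *\<^sub>R B x y" for r x y
      by (rule LIMSEQ_unique[OF B])
        (unfold linear_simps[OF lin] inner_scaleR_left real_scaleR_def, intro tendsto_mult_left B)
    show "B x (r *\<^sub>R y) = r *\<^sub>R B x y" for r x y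
      by (rule LIMSEQ_unique[OF B])
        (unfold inner_scaleR_right real_scaleR_def, intro tendsto_mult_left B)
    have "norm (B x y) \<le> norm x * norm y * C" for x y
    proof (rule tendsto_upperbound[OF tendsto_norm[OF B]])
      have "\<bar>inner (A N x) y\<bar> \<le> norm x * norm y * C" for N
        using Cauchy_Schwarz_ineq2[of "A N x" y] mult_right_mono[OF bound[of N x], of "norm y"]
        by (simp add: mult.commute mult.left_commute)
      then show "\<forall>\<^sub>F N in sequentially. norm (inner (A N x) y) \<le> norm x * norm y * C"
        by simp
    qed simp
    then show "\<exists>K. \<forall>x y. norm (B x y) \<le> norm x * norm y * K"
      by blast
  qed
  then obtain P where "bounded_linear P" and "\<And>x y. B x y = inner (P x) y"
    using bounded_bilinear_form_eq_inner by blast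
  with B show ?thesis
    unfolding wot_tendsto_def by metis
qed

lemma wot_tendsto_selfadjoint:
  assumes wot: "wot_tendsto A P F" and "F \<noteq> bot"
    and sa: "\<forall>\<^sub>F i in F. \<forall>x y. inner (A i x) y = inner x (A i y)"
  shows "inner (P x) y = inner x (P y)"
proof -
  have "((\<lambda>i. inner (A i x) y) \<longlongrightarrow> inner (P x) y) F"
    using wot unfolding wot_tendsto_def by blast
  moreover have "\<forall>\<^sub>F i in F. inner (A i x) y = inner (A i y) x"
    using sa by (rule eventually_mono) (simp add: inner_commute)
  ultimately have "((\<lambda>i. inner (A i y) x) \<longlongrightarrow> inner (P x) y) F"
    by (rule Lim_transform_eventually)
  moreover have "((\<lambda>i. inner (A i y) x) \<longlongrightarrow> inner (P y) x) F"
    using wot unfolding wot_tendsto_def by blast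
  ultimately show ?thesis
    using tendsto_unique[OF \<open>F \<noteq> bot\<close>] by (metis inner_commute)
qed

lemma norm_weak_limit_le:
  fixes v :: "'i \<Rightarrow> 'h::real_inner"
  assumes weak: "\<And>z. ((\<lambda>i. inner (v i) z) \<longlongrightarrow> inner w z) F" and "F \<noteq> bot"
    and le: "\<forall>\<^sub>F i in F. norm (v i) \<le> c i" and c: "(c \<longlongrightarrow> c0) F"
  shows "norm w \<le> c0"
proof -
  have "\<forall>\<^sub>F i in F. 0 \<le> c i"
    using le by (rule eventually_mono) (rule order_trans[OF norm_ge_zero])
  then have "0 \<le> c0"
    by (rule tendsto_lowerbound[OF c _ \<open>F \<noteq> bot\<close>])
  have "\<forall>\<^sub>F i in F. inner (v i) w \<le> c i * norm w"
    using le by (rule eventually_mono)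
      (meson Cauchy_Schwarz_ineq2 abs_le_iff mult_right_mono norm_ge_zero order_trans)
  then have "inner w w \<le> c0 * norm w"
    using tendsto_le[OF \<open>F \<noteq> bot\<close> tendsto_mult_right[OF c] weak] by blast
  then show ?thesis
    using \<open>0 \<le> c0\<close> by (cases "w = 0") (auto simp: power2_eq_square simp flip: power2_norm_eq_inner)
qed

lemma wot_limit_idempotent:
  fixes A :: "nat \<Rightarrow> 'h::real_inner \<Rightarrow> 'h"
  assumes wot: "wot_tendsto A P sequentially"
    and sa: "\<And>x y. inner (P x) y = inner x (P y)"
    and absorb: "\<exists>\<epsilon>. \<epsilon> \<longlonglongrightarrow> 0 \<and>
      (\<forall>\<^sub>F M in sequentially. \<forall>\<^sub>F N in sequentially. norm (A N (A M x) - A M x) \<le> \<epsilon> M)"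
  shows "P (P x) = P x"
proof -
  obtain \<epsilon> where \<epsilon>: "\<epsilon> \<longlonglongrightarrow> 0"
    and near: "\<forall>\<^sub>F M in sequentially. \<forall>\<^sub>F N in sequentially. norm (A N (A M x) - A M x) \<le> \<epsilon> M"
    using absorb by blast
  have weak: "(\<lambda>i. inner (A i v) z) \<longlonglongrightarrow> inner (P v) z" for v z
    using wot unfolding wot_tendsto_def by blast
  have "\<forall>\<^sub>F M in sequentially. norm (P (A M x) - A M x) \<le> \<epsilon> M"
    using near
  proof (rule eventually_mono)
    fix M
    assume "\<forall>\<^sub>F N in sequentially. norm (A N (A M x) - A M x) \<le> \<epsilon> M"
    moreover have "(\<lambda>N. inner (A N (A M x) - A M x) z) \<longlonglongrightarrow> inner (P (A M x) - A M x) z" for z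
      unfolding inner_diff_left by (intro tendsto_diff weak tendsto_const)
    ultimately show "norm (P (A M x) - A M x) \<le> \<epsilon> M"
      by (intro norm_weak_limit_le[where c = "\<lambda>_. \<epsilon> M", OF _ sequentially_bot _ tendsto_const])
  qed
  moreover have "(\<lambda>M. inner (P (A M x) - A M x) z) \<longlonglongrightarrow> inner (P (P x) - P x) z" for z
  proof -
    have "(\<lambda>M. inner (A M x) (P z) - inner (A M x) z) \<longlonglongrightarrow> inner (P x) (P z) - inner (P x) z"
      by (intro tendsto_diff weak)
    then show ?thesis
      unfolding inner_diff_left by (simp only: sa[symmetric])
  qed
  ultimately have "norm (P (P x) - P x) \<le> 0"
    by (intro norm_weak_limit_le[OF _ sequentially_bot _ \<epsilon>])
  then show ?thesis
    by simp
qed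

lemma inner_conjugate_diff_le:
  fixes U B :: "'a::real_inner \<Rightarrow> 'a"
  assumes "linear B" and B_norm: "\<And>v. norm (B v) \<le> norm v"
    and U_sa: "\<And>v w. inner (U v) w = inner v (U w)" and U_norm: "\<And>v. norm (U v) \<le> norm v"
  shows "\<bar>inner (U (B (U x))) y - inner (B x) y\<bar> \<le> norm (U x - x) * norm y + norm x * norm (U y - y)"
proof -
  interpret B: linear B by fact
  have "inner (U (B (U x))) y - inner (B x) y = inner (B (U x - x)) (U y) + inner (B x) (U y - y)"
    by (simp add: U_sa B.diff inner_diff_left inner_diff_right)
  also have "\<bar>\<dots>\<bar> \<le> norm (B (U x - x)) * norm (U y) + norm (B x) * norm (U y - y)"
    by (rule order_trans[OF abs_triangle_ineq add_mono[OF Cauchy_Schwarz_ineq2 Cauchy_Schwarz_ineq2]])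
  also have "\<dots> \<le> norm (U x - x) * norm y + norm x * norm (U y - y)"
    by (intro add_mono mult_mono) (auto simp: B_norm U_norm)
  finally show ?thesis .
qed

section \<open>Transpositions in a continuous unitary representation\<close>

lemma unitary_op_norm: "unitary_op U \<Longrightarrow> norm (U x) = norm x"
  unfolding unitary_op_def by (simp add: norm_eq_sqrt_inner)

lemma unitary_rep_unitary: "unitary_rep K \<Longrightarrow> bij s \<Longrightarrow> unitary_op (K s)"
  unfolding unitary_rep_def Sinf_def by blast

lemma unitary_rep_comp: "unitary_rep K \<Longrightarrow> bij s \<Longrightarrow> bij t \<Longrightarrow> K (s \<circ> t) = K s \<circ> K t"
  unfolding unitary_rep_def Sinf_def by blast

lemma unitary_rep_transpose_involution:
  assumes "unitary_rep K"
  shows "K (Transposition.transpose a b) (K (Transposition.transpose a b) x) = x"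
proof -
  have "K (Transposition.transpose a b \<circ> Transposition.transpose a b) = id"
    using assms unfolding unitary_rep_def by simp
  then show ?thesis
    using unitary_rep_comp[OF assms] by (metis bij_transpose comp_apply id_apply)
qed

lemma unitary_rep_transpose_selfadjoint:
  assumes "unitary_rep K"
  shows "inner (K (Transposition.transpose a b) x) y = inner x (K (Transposition.transpose a b) y)"
  using unitary_rep_unitary[OF assms bij_transpose] unitary_rep_transpose_involution[OF assms]
  unfolding unitary_op_def by metis

definition stab_displacement :: "((nat \<Rightarrow> nat) \<Rightarrow> 'h::real_normed_vector \<Rightarrow> 'h) \<Rightarrow> 'h \<Rightarrow> nat \<Rightarrow> real"
  where "stab_displacement K x n = (SUP s\<in>Sinf_stab n. norm (K s x - x))"

lemma stab_displacement_tendsto_0: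
  "continuous_rep K \<Longrightarrow> (\<lambda>n. stab_displacement K x n) \<longlonglongrightarrow> 0"
  unfolding continuous_rep_def stab_displacement_def by blast

lemma norm_diff_le_stab_displacement:
  assumes "unitary_rep K" and "s \<in> Sinf_stab n"
  shows "norm (K s x - x) \<le> stab_displacement K x n"
proof -
  have "norm (K t x - x) \<le> 2 * norm x" if "t \<in> Sinf_stab n" for t
    using norm_triangle_ineq4[of "K t x" x] unitary_op_norm[OF unitary_rep_unitary[OF assms(1)]] that
    unfolding Sinf_stab_def by simp
  then have "bdd_above ((\<lambda>t. norm (K t x - x)) ` Sinf_stab n)"
    by (meson bdd_aboveI2)
  then show ?thesis
    unfolding stab_displacement_def by (rule cSUP_upper[OF assms(2)])
qed

lemma transpose_in_Sinf_stab:
  "n \<le> a \<Longrightarrow> n \<le> b \<Longrightarrow> Transposition.transpose a b \<in> Sinf_stab n"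
  by (simp add: Sinf_stab_def Transposition.transpose_def)

lemma Cauchy_inner_transposition_rep:
  fixes K :: "(nat \<Rightarrow> nat) \<Rightarrow> 'h::real_inner \<Rightarrow> 'h"
  assumes "unitary_rep K" and "continuous_rep K"
  shows "Cauchy (\<lambda>N. inner (K (Transposition.transpose k N) x) y)"
proof (rule Cauchy_if_tail_dist_le)
  show "(\<lambda>n. stab_displacement K x n * norm y + norm x * stab_displacement K y n) \<longlonglongrightarrow> 0"
    using tendsto_add[OF tendsto_mult_left_zero tendsto_mult_right_zero,
        OF stab_displacement_tendsto_0[OF assms(2)] stab_displacement_tendsto_0[OF assms(2)]]
    by simp
  show "\<forall>\<^sub>F n in sequentially. \<forall>M N. n \<le> M \<longrightarrow> n \<le> N \<longrightarrow>
      dist (inner (K (Transposition.transpose k M) x) y) (inner (K (Transposition.transpose k N) x) y)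
        \<le> stab_displacement K x n * norm y + norm x * stab_displacement K y n"
    using eventually_gt_at_top[of k]
  proof (rule eventually_mono, intro allI impI)
    fix n M N
    assume "k < n" "n \<le> M" "n \<le> N"
    define U where "U = K (Transposition.transpose M N)"
    define B where "B = K (Transposition.transpose k N)"
    have "Transposition.transpose k M
        = Transposition.transpose M N \<circ> Transposition.transpose k N \<circ> Transposition.transpose M N"
      using transpose_comp_triple[of M k N] \<open>k < n\<close> \<open>n \<le> M\<close> \<open>n \<le> N\<close>
      by (simp add: transpose_commute)
    then have "K (Transposition.transpose k M) x = U (B (U x))"
      unfolding U_def B_def using unitary_rep_comp[OF assms(1)] by (simp add: bij_comp)
    then have "dist (inner (K (Transposition.transpose k M) x) y) (inner (K (Transposition.transpose k N) x) y)
        = \<bar>inner (U (B (U x))) y - inner (B x) y\<bar>"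
      unfolding dist_real_def B_def by simp
    also have "\<dots> \<le> norm (U x - x) * norm y + norm x * norm (U y - y)"
      unfolding U_def B_def
      using unitary_rep_unitary[OF assms(1) bij_transpose]
      by (intro inner_conjugate_diff_le unitary_rep_transpose_selfadjoint[OF assms(1)])
        (auto simp: unitary_op_def unitary_op_norm bounded_linear.linear)
    also have "\<dots> \<le> stab_displacement K x n * norm y + norm x * stab_displacement K y n"
      unfolding U_def using \<open>n \<le> M\<close> \<open>n \<le> N\<close>
      by (intro add_mono mult_right_mono mult_left_mono norm_ge_zero
          norm_diff_le_stab_displacement[OF assms(1) transpose_in_Sinf_stab])
    finally show "dist (inner (K (Transposition.transpose k M) x) y) (inner (K (Transposition.transpose k N) x) y)
        \<le> stab_displacement K x n * norm y + norm x * stab_displacement K y n" .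
  qed
qed

lemma norm_transposition_rep_comp_diff_le:
  assumes "unitary_rep K" and "k < M" and "M < N"
  shows "norm (K (Transposition.transpose k N) (K (Transposition.transpose k M) x)
      - K (Transposition.transpose k M) x) \<le> stab_displacement K x M"
proof -
  let ?U = "K (Transposition.transpose M N)" and ?A = "K (Transposition.transpose k M)"
  have "Transposition.transpose k N \<circ> Transposition.transpose k M
      = Transposition.transpose k M \<circ> Transposition.transpose M N"
    using assms by (auto simp: fun_eq_iff Transposition.transpose_def)
  then have "K (Transposition.transpose k N) (?A x) = ?A (?U x)"
    using unitary_rep_comp[OF assms(1)] by (metis bij_transpose comp_apply)
  moreover have "norm (?A (?U x) - ?A x) = norm (?U x - x)"
    using unitary_rep_unitary[OF assms(1) bij_transpose]
    by (metis unitary_op_def unitary_op_norm linear_simps(2))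
  moreover have "norm (?U x - x) \<le> stab_displacement K x M"
    using norm_diff_le_stab_displacement[OF assms(1) transpose_in_Sinf_stab] assms(3) by simp
  ultimately show ?thesis
    by simp
qed

theorem lemma4:
  fixes K :: "(nat \<Rightarrow> nat) \<Rightarrow> 'h::{real_inner, complete_space} \<Rightarrow> 'h"
    and k :: nat
  assumes "unitary_rep K"
    and "continuous_rep K"
  shows "\<exists>P. selfadjoint_projection P \<and>
           wot_tendsto (\<lambda>N. K (Transposition.transpose k N)) P sequentially"
proof -
  define A where "A N = K (Transposition.transpose k N)" for N
  have unitary: "unitary_op (A N)" for N
    unfolding A_def using unitary_rep_unitary[OF assms(1) bij_transpose] .
  obtain P where "bounded_linear P" and wot: "wot_tendsto A P sequentially"
    using ex_wot_limit_if_Cauchy_inner[of A 1] unitary Cauchy_inner_transposition_rep[OF assms]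
    unfolding A_def by (auto simp: unitary_op_def unitary_op_norm)
  have sa: "inner (P x) y = inner x (P y)" for x y
    using wot_tendsto_selfadjoint[OF wot] unitary_rep_transpose_selfadjoint[OF assms(1)]
    unfolding A_def by simp
  have "P (P x) = P x" for x
  proof (rule wot_limit_idempotent[OF wot sa])
    have "\<forall>\<^sub>F M in sequentially. \<forall>\<^sub>F N in sequentially.
        norm (A N (A M x) - A M x) \<le> stab_displacement K x M"
      using eventually_gt_at_top[of k]
      by (rule eventually_mono)
        (auto intro: eventually_mono[OF eventually_gt_at_top]
          norm_transposition_rep_comp_diff_le[OF assms(1)] simp: A_def)
    then show "\<exists>\<epsilon>. \<epsilon> \<longlonglongrightarrow> 0 \<and>
        (\<forall>\<^sub>F M in sequentially. \<forall>\<^sub>F N in sequentially. norm (A N (A M x) - A M x) \<le> \<epsilon> M)"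
      using stab_displacement_tendsto_0[OF assms(2)] by blast
  qed
  then show ?thesis
    using \<open>bounded_linear P\<close> sa wot unfolding selfadjoint_projection_def A_def
    by (auto intro!: exI[of _ P])
qed

end
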